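(* Let $p\in\mathcal M_1^+$ and define $\pi_k=\sum_{\ell\ge k}\frac{1}{\ell+1}p_\ell$ for $k\in\mathbb N_0$. Then $\pi=(\pi_k)\in\mathcal M_1^+$, and $$\mathcal R_1(p)_i=\sum_{j=0}^i\pi_j\,\pi_{i-j}=(\pi*\pi)_i\quad\text{for all }i\in\mathbb N_0,$$ where $\mathcal R_1(p)_i=\sum_{k,\ell\ge0,\ k+\ell\ge i}\frac{1+\min\{k,\ell,i,k+\ell-i\}}{(k+1)(\ell+1)}p_kp_\ell$ and $*$ is convolution in $\ell^1(\mathbb N_0)$.
   Context: $\mathcal M_1^+$ is the set of probability measures on $\mathbb N_0$, identified with nonnegative sequences summing to $1$. *)

theory Defs
  imports "HOL-Analysis.Analysis"
begin

definition M1plus :: "(nat \<Rightarrow> real) set" where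
  "M1plus = {p. (\<forall>k. 0 \<le> p k) \<and> p sums 1}"

definition R1 :: "(nat \<Rightarrow> real) \<Rightarrow> nat \<Rightarrow> real" where
  "R1 p i = (\<Sum>\<^sub>\<infinity>(k,l)\<in>{(k,l). k + l \<ge> i}.
      (1 + real (min (min k l) (min i (k + l - i)))) / (real (k+1) * real (l+1)) * p k * p l)"

definition conv :: "(nat \<Rightarrow> real) \<Rightarrow> (nat \<Rightarrow> real) \<Rightarrow> nat \<Rightarrow> real" where
  "conv a b i = (\<Sum>j=0..i. a j * b (i - j))"

end

theory Submission
  imports Defs
begin

text \<open>Put g_l = p_l / (l + 1), so that \<pi>_k is the tail sum of g from k on. Exchanging
  the order of summation, \<Sum>_k \<pi>_k = \<Sum>_l (l + 1) g_l = \<Sum>_l p_l = 1. Likewise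
  (\<pi> * \<pi>)_i = \<Sum>_{j \<le> i} \<Sum>_{k \<ge> j} \<Sum>_{l \<ge> i - j} g_k g_l, in which the pair (k, l)
  occurs once for each j \<le> i with i - l \<le> j \<le> k: that is 1 + min {k, l, i, k + l - i}
  times if k + l \<ge> i and never otherwise, which is exactly the weight of p_k p_l in R_1(p)_i.\<close>

lemma has_sum_sum:
  fixes f :: "'i \<Rightarrow> 'a \<Rightarrow> 'b::topological_comm_monoid_add"
  assumes "finite I" "\<And>j. j \<in> I \<Longrightarrow> (f j has_sum s j) A"
  shows "((\<lambda>x. \<Sum>j\<in>I. f j x) has_sum (\<Sum>j\<in>I. s j)) A"
  using assms by (induction I rule: finite_induct) (auto intro: has_sum_add)

lemma has_sum_product_nonneg:
  fixes f g :: "_ \<Rightarrow> real"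
  assumes f: "(f has_sum s) A" and g: "(g has_sum t) B"
    and "\<And>x. x \<in> A \<Longrightarrow> 0 \<le> f x" "\<And>y. y \<in> B \<Longrightarrow> 0 \<le> g y"
  shows "((\<lambda>(x, y). f x * g y) has_sum s * t) (A \<times> B)"
proof -
  have rows: "((\<lambda>y. f x * g y) has_sum f x * t) B" for x
    by (rule has_sum_cmult_right[OF g])
  have total: "((\<lambda>x. f x * t) has_sum s * t) A"
    by (rule has_sum_cmult_left[OF f])
  have "(\<lambda>(x, y). f x * g y) summable_on A \<times> B"
    by (rule summable_on_SigmaI[OF _ has_sum_imp_summable[OF total]])
       (use rows assms(3,4) in auto)
  then show ?thesis
    by (intro has_sum_SigmaI[OF _ total]) (use rows in auto)
qed

lemma has_sum_tail_sums:
  fixes g :: "nat \<Rightarrow> real"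
  assumes g_nonneg: "\<And>l. 0 \<le> g l" and weighted: "((\<lambda>l. real (Suc l) * g l) has_sum s) UNIV"
  shows "((\<lambda>k. \<Sum>\<^sub>\<infinity>l\<in>{k..}. g l) has_sum s) UNIV"
proof -
  define F where "F = (\<lambda>(l::nat, k::nat). if k \<le> l then g l else 0)"
  have rows: "((\<lambda>k. F (l, k)) has_sum real (Suc l) * g l) UNIV" for l
  proof -
    have "((\<lambda>k. F (l, k)) has_sum real (Suc l) * g l) {..l}"
      by (rule has_sum_finiteI) (auto simp: F_def)
    then show ?thesis
      by (rule has_sum_cong_neutral[THEN iffD1, rotated -1]) (auto simp: F_def)
  qed
  have "F summable_on UNIV \<times> UNIV"
    by (rule summable_on_SigmaI[OF rows has_sum_imp_summable[OF weighted]])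
       (auto simp: F_def g_nonneg)
  then have "(F has_sum s) (UNIV \<times> UNIV)"
    by (intro has_sum_SigmaI[OF rows weighted])
  then have swapped: "((\<lambda>(k, l). F (l, k)) has_sum s) (UNIV \<times> UNIV)"
    using has_sum_swap by blast
  have g_summable: "g summable_on UNIV"
    by (rule summable_on_comparison_test[OF has_sum_imp_summable[OF weighted]])
       (simp_all add: ring_distribs g_nonneg)
  then have "(g has_sum (\<Sum>\<^sub>\<infinity>l\<in>{k..}. g l)) {k..}" for k
    by (simp add: summable_on_subset_banach[OF g_summable])
  then have columns: "((\<lambda>l. F (l, k)) has_sum (\<Sum>\<^sub>\<infinity>l\<in>{k..}. g l)) UNIV" for k
    by (rule has_sum_cong_neutral[THEN iffD1, rotated -1]) (auto simp: F_def)
  show ?thesis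
    by (rule has_sum_SigmaD[OF swapped]) (use columns in simp)
qed

lemma card_convolution_indices:
  fixes i k l :: nat
  shows "card {j \<in> {0..i}. j \<le> k \<and> i - j \<le> l} =
    (if i \<le> k + l then 1 + min (min k l) (min i (k + l - i)) else 0)"
proof -
  have "{j \<in> {0..i}. j \<le> k \<and> i - j \<le> l} = {i - l .. min i k}" by auto
  then have card: "card {j \<in> {0..i}. j \<le> k \<and> i - j \<le> l} = Suc (min i k) - (i - l)"
    by simp
  show ?thesis
    unfolding card by (auto simp: min_def)
qed

lemma has_sum_conv_tail_sums:
  fixes a b :: "nat \<Rightarrow> real"
  assumes a: "a summable_on UNIV" "\<And>k. 0 \<le> a k"
    and b: "b summable_on UNIV" "\<And>k. 0 \<le> b k"
  shows "((\<lambda>(k, l). (1 + real (min (min k l) (min i (k + l - i)))) * a k * b l)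
    has_sum conv (\<lambda>k. \<Sum>\<^sub>\<infinity>l\<in>{k..}. a l) (\<lambda>k. \<Sum>\<^sub>\<infinity>l\<in>{k..}. b l) i) {(k, l). i \<le> k + l}"
proof -
  define W where "W j = {j..} \<times> {i - j..}" for j
  define h where "h = (\<lambda>(k, l). a k * b l)"
  have tails: "(f has_sum (\<Sum>\<^sub>\<infinity>l\<in>{k..}. f l)) {k..}"
    if "f summable_on UNIV" for f :: "nat \<Rightarrow> real" and k
    by (simp add: summable_on_subset_banach[OF that])
  have "(h has_sum (\<Sum>\<^sub>\<infinity>l\<in>{j..}. a l) * (\<Sum>\<^sub>\<infinity>l\<in>{i - j..}. b l)) (W j)" for j
    unfolding h_def W_def
    by (rule has_sum_product_nonneg[OF tails[OF a(1)] tails[OF b(1)]]) (use a b in auto)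
  then have "((\<lambda>x. if x \<in> W j then h x else 0) has_sum
      (\<Sum>\<^sub>\<infinity>l\<in>{j..}. a l) * (\<Sum>\<^sub>\<infinity>l\<in>{i - j..}. b l)) UNIV" for j
    by (rule has_sum_cong_neutral[THEN iffD1, rotated -1]) auto
  then have "((\<lambda>x. \<Sum>j=0..i. if x \<in> W j then h x else 0) has_sum
      conv (\<lambda>k. \<Sum>\<^sub>\<infinity>l\<in>{k..}. a l) (\<lambda>k. \<Sum>\<^sub>\<infinity>l\<in>{k..}. b l) i) UNIV"
    unfolding conv_def by (intro has_sum_sum) auto
  moreover have "(\<Sum>j=0..i. if (k, l) \<in> W j then h (k, l) else 0) =
      (if i \<le> k + l then (1 + real (min (min k l) (min i (k + l - i)))) * a k * b l else 0)"
    for k l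
  proof -
    have "(\<Sum>j=0..i. if (k, l) \<in> W j then h (k, l) else 0) =
        (\<Sum>j\<in>{j \<in> {0..i}. j \<le> k \<and> i - j \<le> l}. h (k, l))"
      by (subst sum.inter_filter) (simp_all add: W_def)
    also have "\<dots> = real (card {j \<in> {0..i}. j \<le> k \<and> i - j \<le> l}) * (a k * b l)"
      by (simp add: h_def)
    finally show ?thesis
      unfolding card_convolution_indices by simp
  qed
  ultimately show ?thesis
    by (subst has_sum_cong_neutral[where T=UNIV]) auto
qed

theorem proposition9:
  fixes p :: "nat \<Rightarrow> real" and \<pi> :: "nat \<Rightarrow> real"
  assumes "p \<in> M1plus"
    and "\<And>k. \<pi> k = (\<Sum>\<^sub>\<infinity>l\<in>{k..}. p l / real (l + 1))"
  shows "\<pi> \<in> M1plus \<and> (\<forall>i. R1 p i = conv \<pi> \<pi> i)"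
proof -
  have p_nonneg: "\<And>k. 0 \<le> p k" and "p sums 1"
    using assms(1) by (auto simp: M1plus_def)
  then have p_has_sum: "(p has_sum 1) UNIV"
    by (intro sums_nonneg_imp_has_sum)
  define g where "g l = p l / real (l + 1)" for l
  have g_nonneg: "0 \<le> g l" for l
    by (simp add: g_def p_nonneg)
  have g_summable: "g summable_on UNIV"
    by (rule summable_on_comparison_test[OF has_sum_imp_summable[OF p_has_sum]])
       (auto simp: g_def p_nonneg divide_le_eq ring_distribs)
  have \<pi>_eq: "\<pi> = (\<lambda>k. \<Sum>\<^sub>\<infinity>l\<in>{k..}. g l)"
    using assms(2) by (auto simp: g_def)
  have "(\<lambda>l. real (Suc l) * g l) = p"
    by (auto simp: g_def)
  then have "(\<pi> has_sum 1) UNIV"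
    unfolding \<pi>_eq using has_sum_tail_sums[OF g_nonneg] p_has_sum by simp
  then have "\<pi> \<in> M1plus"
    unfolding M1plus_def \<pi>_eq by (auto intro: has_sum_imp_sums infsum_nonneg g_nonneg)
  moreover have "R1 p i = conv \<pi> \<pi> i" for i
  proof -
    have "R1 p i = (\<Sum>\<^sub>\<infinity>(k, l)\<in>{(k, l). i \<le> k + l}.
        (1 + real (min (min k l) (min i (k + l - i)))) * g k * g l)"
      unfolding R1_def by (intro infsum_cong) (auto simp: g_def)
    then show ?thesis
      unfolding \<pi>_eq
      using has_sum_conv_tail_sums[OF g_summable g_nonneg g_summable g_nonneg]
      by (simp add: infsumI)
  qed
  ultimately show ?thesis by blast
qed

end
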